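(* Let $\Phi(L,W,S,B)$ with $L\le c_1$, $2\le W\le c_2N$, $S\le c_2N$, $1\le B\le c_2N$ for constants $c_1,c_2$ and $N$ sufficiently large, and let $\Delta\Phi(L,W,S,B)=\{\Delta F:F\in\Phi(L,W,S,B)\}$. Then there is a constant $C$ depending only on $d,c_1$ such that for all $\delta\in(0,1)$ $$\log\mathcal N\big(\delta,\Delta\Phi(L,W,S,B),\|\cdot\|_\infty\big)\le C\,S\big[\log(\delta^{-1})+3^L\log(WB)\big],$$ where $\|g\|_\infty=\sup_{x\in\Omega}|g(x)|$.
   Context: $\Omega=[0,1]^d$. For integers $L,W,S\ge1$ and $B>0$, $\Phi(L,W,S,B)$ is the set of functions $F:\mathbb R^d\to\mathbb R$ of the form $F=(\mathcal W^{(L)}\eta_3(\cdot)+b^{(L)})\circ\cdots\circ(\mathcal W^{(2)}\eta_3(\cdot)+b^{(2)})\circ(\mathcal W^{(1)}x+b^{(1)})$, where $\eta_3(t)=\max\{t,0\}^3$ acts componentwise, $\mathcal W^{(1)}\in\mathbb R^{W\times d}$, $b^{(1)}\in\mathbb R^W$, $\mathcal W^{(l)}\in\mathbb R^{W\times W}$, $b^{(l)}\in\mathbb R^W$ for $1<l<L$, $\mathcal W^{(L)}\in\mathbb R^{1\times W}$, $b^{(L)}\in\mathbb R$, the total number of nonzero entries of all $\mathcal W^{(l)},b^{(l)}$ is at most $S$, and all entries have absolute value at most $B$. $\Delta F=\sum_{j=1}^d\partial^2F/\partial x_j^2$ (well defined since $\eta_3\in C^2$). $\mathcal N(\delta,A,\|\cdot\|)$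 is the minimal number of $\|\cdot\|$-balls of radius $\delta$ centered in $A$ needed to cover $A$. *)

theory Defs
  imports "HOL-Analysis.Analysis"
begin

text \<open>Inputs x in R^d are represented as functions nat => real; only the
coordinates x 0, ..., x (d-1) are used.\<close>

definition eta3 :: "real \<Rightarrow> real" where
  "eta3 t = (max t 0) ^ 3"

definition Omega :: "nat \<Rightarrow> (nat \<Rightarrow> real) set" where
  "Omega d = {x. \<forall>j<d. 0 \<le> x j \<and> x j \<le> 1}"

definition nrows :: "nat \<Rightarrow> nat \<Rightarrow> nat \<Rightarrow> nat" where
  "nrows L W l = (if l = L then 1 else W)"

definition ncols :: "nat \<Rightarrow> nat \<Rightarrow> nat \<Rightarrow> nat" where
  "ncols d W l = (if l = 1 then d else W)"

text \<open>Wt l i j is the (i,j) entry of the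
weight matrix of layer l, bs l i the i-th bias entry of layer l.\<close>
primrec hval :: "nat \<Rightarrow> nat \<Rightarrow> (nat \<Rightarrow> nat \<Rightarrow> nat \<Rightarrow> real) \<Rightarrow> (nat \<Rightarrow> nat \<Rightarrow> real)
    \<Rightarrow> (nat \<Rightarrow> real) \<Rightarrow> nat \<Rightarrow> nat \<Rightarrow> real" where
  "hval d W Wt bs x 0 = x"
| "hval d W Wt bs x (Suc l) = (\<lambda>i.
     (\<Sum>j < ncols d W (Suc l).
        Wt (Suc l) i j * (if l = 0 then hval d W Wt bs x l j else eta3 (hval d W Wt bs x l j)))
     + bs (Suc l) i)"

definition weight_idx :: "nat \<Rightarrow> nat \<Rightarrow> nat \<Rightarrow> (nat \<times> nat \<times> nat) set" where
  "weight_idx d L W = {(l, i, j). 1 \<le> l \<and> l \<le> L \<and> i < nrows L W l \<and> j < ncols d W l}"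

definition bias_idx :: "nat \<Rightarrow> nat \<Rightarrow> (nat \<times> nat) set" where
  "bias_idx L W = {(l, i). 1 \<le> l \<and> l \<le> L \<and> i < nrows L W l}"

definition Phi :: "nat \<Rightarrow> nat \<Rightarrow> nat \<Rightarrow> nat \<Rightarrow> real \<Rightarrow> ((nat \<Rightarrow> real) \<Rightarrow> real) set" where
  "Phi d L W S B = {F. \<exists>Wt bs.
      F = (\<lambda>x. hval d W Wt bs x L 0)
    \<and> card {(l, i, j) \<in> weight_idx d L W. Wt l i j \<noteq> 0}
        + card {(l, i) \<in> bias_idx L W. bs l i \<noteq> 0} \<le> S
    \<and> (\<forall>(l, i, j) \<in> weight_idx d L W. \<bar>Wt l i j\<bar> \<le> B)
    \<and> (\<forall>(l, i) \<in> bias_idx L W. \<bar>bs l i\<bar> \<le> B)}"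

definition laplacian :: "nat \<Rightarrow> ((nat \<Rightarrow> real) \<Rightarrow> real) \<Rightarrow> (nat \<Rightarrow> real) \<Rightarrow> real" where
  "laplacian d F x = (\<Sum>j<d. deriv (deriv (\<lambda>t. F (x(j := t)))) (x j))"

definition sup_norm_Omega :: "nat \<Rightarrow> ((nat \<Rightarrow> real) \<Rightarrow> real) \<Rightarrow> real" where
  "sup_norm_Omega d g = (SUP x\<in>Omega d. \<bar>g x\<bar>)"

text \<open>Covering number: minimal number of closed sup-norm balls of radius delta,
centred in A, covering A (infinity if no finite cover exists).\<close>
definition covering_number :: "nat \<Rightarrow> real \<Rightarrow> ((nat \<Rightarrow> real) \<Rightarrow> real) set \<Rightarrow> enat" where
  "covering_number d \<delta> A = (INF C \<in> {C. finite C \<and> C \<subseteq> A \<and>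
      (\<forall>g\<in>A. \<exists>c\<in>C. sup_norm_Omega d (\<lambda>x. g x - c x) \<le> \<delta>)}. enat (card C))"

end

theory Submission
  imports Defs
begin

text \<open>The Laplacian of a network is computed exactly by propagating, together with every
  layer value, its first and second partial derivatives in one coordinate (forward-mode
  differentiation). If two networks have parameters bounded by \<open>B\<close> that differ by at most
  \<open>\<epsilon>\<close>, an induction over the layers shows that these three quantities stay bounded by
  \<open>Q^(3^l - 1)\<close> and \<open>\<epsilon> Q^(3^l - 1)\<close>-close, with \<open>Q = 6 (d + W) B\<close>: the cubic
  activation triples the degree in every layer. Rounding all parameters towards zero on the
  grid \<open>\<epsilon> \<int>\<close>, with \<open>\<epsilon> = \<delta> / (d Q^(3^L))\<close>, therefore yields a \<open>\<delta>\<close>-cover of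
  \<open>\<Delta>\<Phi>\<close> by Laplacians of quantized networks. These are determined by at most \<open>S\<close> nonzero
  parameters with values in a grid of \<open>O(B / \<epsilon>)\<close> points, so there are at most
  \<open>(#parameters \<cdot> #grid + 1)^S\<close> of them; taking logarithms gives the bound.\<close>

section \<open>The activation and its derivatives\<close>

lemma has_real_derivative_max0_power:
  fixes n :: nat and t :: real
  shows "((\<lambda>s. max s 0 ^ Suc (Suc n)) has_real_derivative real (Suc (Suc n)) * max t 0 ^ Suc n) (at t)"
proof (cases t "0::real" rule: linorder_cases)
  case less
  have "eventually (\<lambda>s. s \<in> {..<0}) (nhds t)"
    using less by (intro eventually_nhds_in_open) auto
  then have "eventually (\<lambda>s. 0 = max s 0 ^ Suc (Suc n)) (nhds t)"
    by (rule eventually_mono) auto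
  from DERIV_cong_ev[OF refl this, of 0] less show ?thesis
    by simp
next
  case greater
  have "eventually (\<lambda>s. s \<in> {0<..}) (nhds t)"
    using greater by (intro eventually_nhds_in_open) auto
  then have "eventually (\<lambda>s. s ^ Suc (Suc n) = max s 0 ^ Suc (Suc n)) (nhds t)"
    by (rule eventually_mono) auto
  moreover have "((\<lambda>s. s ^ Suc (Suc n)) has_real_derivative real (Suc (Suc n)) * t ^ Suc n) (at t)"
    by (rule derivative_eq_intros refl | simp)+
  ultimately show ?thesis
    using DERIV_cong_ev[OF refl] greater by (metis max.absorb1 order_less_imp_le)
next
  case equal
  \<comment> \<open>At the kink the difference quotient is bounded by \<open>\<bar>h\<bar>^(n+1)\<close>.\<close>
  have "((\<lambda>h. (max h 0 ^ Suc (Suc n) - 0) / h) \<longlongrightarrow> 0) (at (0::real))"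
  proof (rule Lim_null_comparison)
    show "\<forall>\<^sub>F h in at 0. norm ((max h 0 ^ Suc (Suc n) - 0) / h) \<le> \<bar>h\<bar> ^ Suc n"
    proof (intro always_eventually allI)
      fix h :: real
      show "norm ((max h 0 ^ Suc (Suc n) - 0) / h) \<le> \<bar>h\<bar> ^ Suc n"
        by (cases "0 < h") (simp_all add: abs_mult power_abs max_def mult_nonpos_nonneg)
    qed
    show "((\<lambda>h::real. \<bar>h\<bar> ^ Suc n) \<longlongrightarrow> 0) (at 0)"
      by (rule tendsto_eq_intros refl | simp)+
  qed
  then show ?thesis
    using equal by (simp add: DERIV_def)
qed

definition eta3' :: "real \<Rightarrow> real" where
  "eta3' t = 3 * max t 0 ^ 2"

definition eta3'' :: "real \<Rightarrow> real" where
  "eta3'' t = 6 * max t 0"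

lemma DERIV_eta3: "(eta3 has_real_derivative eta3' t) (at t)"
  using has_real_derivative_max0_power[of 1 t]
  unfolding eta3_def eta3'_def by (simp add: numeral_eq_Suc)

lemma DERIV_eta3': "(eta3' has_real_derivative eta3'' t) (at t)"
  using DERIV_cmult[OF has_real_derivative_max0_power[of 0 t], of 3]
  unfolding eta3'_def eta3''_def by (simp add: numeral_eq_Suc)

definition act :: "nat \<Rightarrow> real \<Rightarrow> real" where
  "act l v = (if l = 0 then v else eta3 v)"

definition act_dx :: "nat \<Rightarrow> real \<Rightarrow> real \<Rightarrow> real" where
  "act_dx l v v1 = (if l = 0 then v1 else eta3' v * v1)"

definition act_dxx :: "nat \<Rightarrow> real \<Rightarrow> real \<Rightarrow> real \<Rightarrow> real" where
  "act_dxx l v v1 v2 = (if l = 0 then v2 else eta3'' v * v1 ^ 2 + eta3' v * v2)"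

lemma DERIV_act:
  assumes "(v has_real_derivative v1 t) (at t)" and "(v1 has_real_derivative v2 t) (at t)"
  shows "((\<lambda>s. act l (v s)) has_real_derivative act_dx l (v t) (v1 t)) (at t)"
    and "((\<lambda>s. act_dx l (v s) (v1 s)) has_real_derivative act_dxx l (v t) (v1 t) (v2 t)) (at t)"
proof -
  have eta3_v: "((\<lambda>s. eta3' (v s)) has_real_derivative eta3'' (v t) * v1 t) (at t)"
    by (rule DERIV_chain2[OF DERIV_eta3' assms(1)])
  show "((\<lambda>s. act l (v s)) has_real_derivative act_dx l (v t) (v1 t)) (at t)"
    using assms(1) DERIV_chain2[OF DERIV_eta3 assms(1)] by (simp add: act_def act_dx_def)
  show "((\<lambda>s. act_dx l (v s) (v1 s)) has_real_derivative act_dxx l (v t) (v1 t) (v2 t)) (at t)"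
    using assms(2) DERIV_mult[OF eta3_v assms(2)]
    by (simp add: act_dx_def act_dxx_def power2_eq_square algebra_simps)
qed

section \<open>Forward-mode derivatives of a network\<close>

primrec hval_dx :: "nat \<Rightarrow> nat \<Rightarrow> (nat \<Rightarrow> nat \<Rightarrow> nat \<Rightarrow> real) \<Rightarrow> (nat \<Rightarrow> nat \<Rightarrow> real)
    \<Rightarrow> (nat \<Rightarrow> real) \<Rightarrow> nat \<Rightarrow> nat \<Rightarrow> nat \<Rightarrow> real" where
  "hval_dx d W Wt bs x j 0 = (\<lambda>k. if k = j then 1 else 0)"
| "hval_dx d W Wt bs x j (Suc l) = (\<lambda>i. \<Sum>k < ncols d W (Suc l).
     Wt (Suc l) i k * act_dx l (hval d W Wt bs x l k) (hval_dx d W Wt bs x j l k))"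

primrec hval_dxx :: "nat \<Rightarrow> nat \<Rightarrow> (nat \<Rightarrow> nat \<Rightarrow> nat \<Rightarrow> real) \<Rightarrow> (nat \<Rightarrow> nat \<Rightarrow> real)
    \<Rightarrow> (nat \<Rightarrow> real) \<Rightarrow> nat \<Rightarrow> nat \<Rightarrow> nat \<Rightarrow> real" where
  "hval_dxx d W Wt bs x j 0 = (\<lambda>k. 0)"
| "hval_dxx d W Wt bs x j (Suc l) = (\<lambda>i. \<Sum>k < ncols d W (Suc l).
     Wt (Suc l) i k * act_dxx l (hval d W Wt bs x l k) (hval_dx d W Wt bs x j l k)
       (hval_dxx d W Wt bs x j l k))"

lemma hval_Suc_act:
  "hval d W Wt bs x (Suc l) i =
     (\<Sum>k < ncols d W (Suc l). Wt (Suc l) i k * act l (hval d W Wt bs x l k)) + bs (Suc l) i"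
  by (simp add: act_def)

lemma DERIV_hval:
  "((\<lambda>s. hval d W Wt bs (x(j := s)) l i) has_real_derivative hval_dx d W Wt bs (x(j := t)) j l i) (at t)
   \<and> ((\<lambda>s. hval_dx d W Wt bs (x(j := s)) j l i) has_real_derivative hval_dxx d W Wt bs (x(j := t)) j l i) (at t)"
proof (induction l arbitrary: i)
  case 0
  show ?case
    by (cases "i = j") auto
next
  case (Suc l)
  let ?v = "\<lambda>k s. hval d W Wt bs (x(j := s)) l k"
  let ?v1 = "\<lambda>k s. hval_dx d W Wt bs (x(j := s)) j l k"
  let ?v2 = "\<lambda>k s. hval_dxx d W Wt bs (x(j := s)) j l k"
  have act: "((\<lambda>s. act l (?v k s)) has_real_derivative act_dx l (?v k t) (?v1 k t)) (at t)"
    "((\<lambda>s. act_dx l (?v k s) (?v1 k s)) has_real_derivative act_dxx l (?v k t) (?v1 k t) (?v2 k t)) (at t)"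
    for k
    using DERIV_act[of "?v k" "?v1 k" t "?v2 k"] Suc.IH[of k] by auto
  show ?case
    unfolding hval_Suc_act hval_dx.simps hval_dxx.simps
    by (intro conjI DERIV_add[where E = 0, simplified] DERIV_sum DERIV_cmult DERIV_const act)
qed

lemma laplacian_hval:
  "laplacian d (\<lambda>x. hval d W Wt bs x L 0) x = (\<Sum>j<d. hval_dxx d W Wt bs x j L 0)"
proof -
  have "deriv (deriv (\<lambda>t. hval d W Wt bs (x(j := t)) L 0)) (x j) = hval_dxx d W Wt bs x j L 0" for j
  proof -
    have "deriv (\<lambda>t. hval d W Wt bs (x(j := t)) L 0) = (\<lambda>t. hval_dx d W Wt bs (x(j := t)) j L 0)"
      using DERIV_hval by (intro ext DERIV_imp_deriv) blast
    moreover have "deriv (\<lambda>t. hval_dx d W Wt bs (x(j := t)) j L 0) (x j) = hval_dxx d W Wt bs x j L 0"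
      using DERIV_hval[of d W Wt bs x j L 0 "x j"] by (intro DERIV_imp_deriv) simp
    ultimately show ?thesis by simp
  qed
  then show ?thesis
    unfolding laplacian_def by simp
qed

section \<open>Bounded perturbations\<close>

definition close_bdd :: "real \<Rightarrow> real \<Rightarrow> real \<Rightarrow> real \<Rightarrow> bool" where
  "close_bdd A D u v \<longleftrightarrow> \<bar>u\<bar> \<le> A \<and> \<bar>v\<bar> \<le> A \<and> \<bar>u - v\<bar> \<le> D"

lemma close_bdd_nonneg: "close_bdd A D u v \<Longrightarrow> 0 \<le> A \<and> 0 \<le> D"
  unfolding close_bdd_def by linarith

lemma close_bdd_mono: "close_bdd A D u v \<Longrightarrow> A \<le> A' \<Longrightarrow> D \<le> D' \<Longrightarrow> close_bdd A' D' u v"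
  unfolding close_bdd_def by linarith

lemma close_bdd_refl: "\<bar>u\<bar> \<le> A \<Longrightarrow> close_bdd A 0 u u"
  unfolding close_bdd_def by simp

lemma close_bdd_add:
  "close_bdd A D u u' \<Longrightarrow> close_bdd A' D' v v' \<Longrightarrow> close_bdd (A + A') (D + D') (u + v) (u' + v')"
  unfolding close_bdd_def by (smt (verit, best))

lemma close_bdd_mult:
  assumes "close_bdd A D u u'" and "close_bdd A' D' v v'"
  shows "close_bdd (A * A') (A * D' + A' * D) (u * v) (u' * v')"
proof -
  from assms have u: "\<bar>u\<bar> \<le> A" "\<bar>u'\<bar> \<le> A" "\<bar>u - u'\<bar> \<le> D"
    and v: "\<bar>v\<bar> \<le> A'" "\<bar>v'\<bar> \<le> A'" "\<bar>v - v'\<bar> \<le> D'"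
    unfolding close_bdd_def by auto
  have "u * v - u' * v' = u * (v - v') + v' * (u - u')"
    by (simp add: algebra_simps)
  then have "\<bar>u * v - u' * v'\<bar> \<le> \<bar>u\<bar> * \<bar>v - v'\<bar> + \<bar>v'\<bar> * \<bar>u - u'\<bar>"
    by (simp add: abs_mult[symmetric] abs_triangle_ineq)
  also have "\<dots> \<le> A * D' + A' * D"
    using u v by (intro add_mono mult_mono) auto
  finally show ?thesis
    using u v unfolding close_bdd_def by (auto simp: abs_mult intro: mult_mono)
qed

lemma close_bdd_sum:
  assumes "finite K" and "\<And>k. k \<in> K \<Longrightarrow> close_bdd (A k) (D k) (u k) (v k)"
  shows "close_bdd (\<Sum>k\<in>K. A k) (\<Sum>k\<in>K. D k) (\<Sum>k\<in>K. u k) (\<Sum>k\<in>K. v k)"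
  using assms
proof (induction K rule: finite_induct)
  case empty
  then show ?case by (simp add: close_bdd_def)
next
  case (insert k K)
  then show ?case by (simp add: close_bdd_add)
qed

lemma close_bdd_power:
  assumes "close_bdd A D u v"
  shows "close_bdd (A ^ Suc n) (real (Suc n) * A ^ n * D) (u ^ Suc n) (v ^ Suc n)"
proof (induction n)
  case 0
  then show ?case using assms by simp
next
  case (Suc n)
  from close_bdd_mult[OF assms Suc.IH]
  show ?case
    by (simp add: algebra_simps)
qed

lemma close_bdd_max0: "close_bdd A D u v \<Longrightarrow> close_bdd A D (max u 0) (max v 0)"
  unfolding close_bdd_def by auto

lemma close_bdd_eta3:
  assumes h: "close_bdd R E h g" and h1: "close_bdd R E h1 g1" and h2: "close_bdd R E h2 g2"
  shows "close_bdd (9 * R ^ 3) (27 * R ^ 2 * E) (eta3 h) (eta3 g)"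
    and "close_bdd (9 * R ^ 3) (27 * R ^ 2 * E) (eta3' h * h1) (eta3' g * g1)"
    and "close_bdd (9 * R ^ 3) (27 * R ^ 2 * E) (eta3'' h * h1 ^ 2 + eta3' h * h2)
           (eta3'' g * g1 ^ 2 + eta3' g * g2)"
proof -
  have RE: "0 \<le> R" "0 \<le> E"
    using close_bdd_nonneg[OF h] by auto
  have m: "close_bdd R E (max h 0) (max g 0)"
    by (rule close_bdd_max0[OF h])
  have const: "close_bdd c 0 c c" if "0 \<le> c" for c :: real
    using that by (simp add: close_bdd_refl)
  have e0: "close_bdd (R ^ 3) (3 * R ^ 2 * E) (eta3 h) (eta3 g)"
    using close_bdd_power[OF m, of 2] by (simp add: eta3_def numeral_eq_Suc)
  have e1: "close_bdd (3 * R ^ 2) (6 * R * E) (eta3' h) (eta3' g)"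
    using close_bdd_mult[OF const close_bdd_power[OF m, of 1], of 3]
    by (simp add: eta3'_def numeral_eq_Suc mult.assoc)
  have e2: "close_bdd (6 * R) (6 * E) (eta3'' h) (eta3'' g)"
    using close_bdd_mult[OF const m, of 6] by (simp add: eta3''_def)
  have sq: "close_bdd (R ^ 2) (2 * R * E) (h1 ^ 2) (g1 ^ 2)"
    using close_bdd_power[OF h1, of 1] by (simp add: numeral_eq_Suc)
  show "close_bdd (9 * R ^ 3) (27 * R ^ 2 * E) (eta3 h) (eta3 g)"
    by (rule close_bdd_mono[OF e0]) (use RE in auto)
  have p1: "close_bdd (3 * R ^ 3) (9 * R ^ 2 * E) (eta3' h * h1) (eta3' g * g1)"
    using close_bdd_mult[OF e1 h1] by (simp add: power2_eq_square power3_eq_cube algebra_simps)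
  then show "close_bdd (9 * R ^ 3) (27 * R ^ 2 * E) (eta3' h * h1) (eta3' g * g1)"
    by (rule close_bdd_mono) (use RE in auto)
  have p2: "close_bdd (6 * R ^ 3) (18 * R ^ 2 * E) (eta3'' h * h1 ^ 2) (eta3'' g * g1 ^ 2)"
    using close_bdd_mult[OF e2 sq] by (simp add: power2_eq_square power3_eq_cube algebra_simps)
  have p3: "close_bdd (3 * R ^ 3) (9 * R ^ 2 * E) (eta3' h * h2) (eta3' g * g2)"
    using close_bdd_mult[OF e1 h2] by (simp add: power2_eq_square power3_eq_cube algebra_simps)
  from close_bdd_add[OF p2 p3]
  show "close_bdd (9 * R ^ 3) (27 * R ^ 2 * E) (eta3'' h * h1 ^ 2 + eta3' h * h2)
      (eta3'' g * g1 ^ 2 + eta3' g * g2)"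
    by (simp add: algebra_simps)
qed

lemma close_bdd_affine:
  fixes n :: nat and w w' a a' :: "nat \<Rightarrow> real"
  assumes w: "\<And>k. k < n \<Longrightarrow> close_bdd B e (w k) (w' k)"
    and a: "\<And>k. k < n \<Longrightarrow> close_bdd A D (a k) (a' k)"
    and b: "close_bdd B e b b'" and A: "1 \<le> A" and D: "0 \<le> D"
  shows "close_bdd (real (n + 1) * B * A) (real (n + 1) * (B * D + A * e))
           ((\<Sum>k<n. w k * a k) + b) ((\<Sum>k<n. w' k * a' k) + b')"
proof -
  have "close_bdd (\<Sum>k<n. B * A) (\<Sum>k<n. B * D + A * e) (\<Sum>k<n. w k * a k) (\<Sum>k<n. w' k * a' k)"
    by (rule close_bdd_sum) (auto intro: close_bdd_mult w a)
  from close_bdd_add[OF this b]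
  have affine: "close_bdd (real n * (B * A) + B) (real n * (B * D + A * e) + e)
      ((\<Sum>k<n. w k * a k) + b) ((\<Sum>k<n. w' k * a' k) + b')"
    by simp
  have "B \<le> B * A" "e \<le> A * e" "0 \<le> B * D"
    using A D close_bdd_nonneg[OF b] mult_left_mono[OF A, of B] mult_right_mono[OF A, of e] by auto
  then show ?thesis
    by (intro close_bdd_mono[OF affine]) (auto simp: algebra_simps)
qed

section \<open>Perturbation of the Laplacian\<close>

lemma power_three_pow_Suc:
  "(x :: real) ^ (3 ^ Suc (Suc l) - 1) = x ^ 2 * (x ^ (3 ^ Suc l - 1)) ^ 3"
proof -
  have "(3::nat) ^ Suc (Suc l) - 1 = 2 + (3 ^ Suc l - 1) * 3"
    using one_le_power[of "3::nat" l] by (simp only: power_Suc) linarith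
  then show ?thesis
    by (simp only: power_add power_mult)
qed

locale close_networks =
  fixes d L W :: nat and B e :: real
    and Wt Wt' :: "nat \<Rightarrow> nat \<Rightarrow> nat \<Rightarrow> real" and bs bs' :: "nat \<Rightarrow> nat \<Rightarrow> real"
    and x :: "nat \<Rightarrow> real"
  assumes d_pos: "1 \<le> d" and W_pos: "1 \<le> W" and B_ge_1: "1 \<le> B" and e_nonneg: "0 \<le> e"
    and x_in_Omega: "x \<in> Omega d"
    and weights_close: "(l, i, k) \<in> weight_idx d L W \<Longrightarrow> close_bdd B e (Wt l i k) (Wt' l i k)"
    and biases_close: "(l, i) \<in> bias_idx L W \<Longrightarrow> close_bdd B e (bs l i) (bs' l i)"
begin

definition pre_close :: "nat \<Rightarrow> nat \<Rightarrow> nat \<Rightarrow> real \<Rightarrow> real \<Rightarrow> bool" where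
  "pre_close j l i A D \<longleftrightarrow>
     close_bdd A D (hval d W Wt bs x l i) (hval d W Wt' bs' x l i)
   \<and> close_bdd A D (hval_dx d W Wt bs x j l i) (hval_dx d W Wt' bs' x j l i)
   \<and> close_bdd A D (hval_dxx d W Wt bs x j l i) (hval_dxx d W Wt' bs' x j l i)"

definition act_close :: "nat \<Rightarrow> nat \<Rightarrow> nat \<Rightarrow> real \<Rightarrow> real \<Rightarrow> bool" where
  "act_close j l k A D \<longleftrightarrow>
     close_bdd A D (act l (hval d W Wt bs x l k)) (act l (hval d W Wt' bs' x l k))
   \<and> close_bdd A D
       (act_dx l (hval d W Wt bs x l k) (hval_dx d W Wt bs x j l k))
       (act_dx l (hval d W Wt' bs' x l k) (hval_dx d W Wt' bs' x j l k))
   \<and> close_bdd A D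
       (act_dxx l (hval d W Wt bs x l k) (hval_dx d W Wt bs x j l k) (hval_dxx d W Wt bs x j l k))
       (act_dxx l (hval d W Wt' bs' x l k) (hval_dx d W Wt' bs' x j l k) (hval_dxx d W Wt' bs' x j l k))"

lemma pre_close_mono: "pre_close j l i A D \<Longrightarrow> A \<le> A' \<Longrightarrow> D \<le> D' \<Longrightarrow> pre_close j l i A' D'"
  unfolding pre_close_def by (meson close_bdd_mono)

lemma width_times_B_ge: "real (d + W) \<le> real (d + W) * B" "1 \<le> real (d + W) * B"
proof -
  show "real (d + W) \<le> real (d + W) * B"
    using mult_left_mono[OF B_ge_1, of "real (d + W)"] by simp
  with d_pos show "1 \<le> real (d + W) * B"
    by linarith
qed

lemma act_close_input: "k < d \<Longrightarrow> act_close j 0 k 1 0"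
  using x_in_Omega unfolding act_close_def act_def act_dx_def act_dxx_def Omega_def
  by (auto intro: close_bdd_refl)

lemma act_close_if_pre_close:
  "0 < l \<Longrightarrow> pre_close j l k R E \<Longrightarrow> act_close j l k (9 * R ^ 3) (27 * R ^ 2 * E)"
  unfolding pre_close_def act_close_def act_def act_dx_def act_dxx_def
  by (elim conjE) (simp add: close_bdd_eta3)

lemma pre_close_Suc:
  assumes l: "l < L" and i: "i < nrows L W (Suc l)" and A: "1 \<le> A" and D: "0 \<le> D"
    and act: "\<And>k. k < ncols d W (Suc l) \<Longrightarrow> act_close j l k A D"
  shows "pre_close j (Suc l) i (real (d + W) * B * A) (real (d + W) * (B * D + A * e))"
proof -
  define n where "n = ncols d W (Suc l)"
  have n: "real (n + 1) \<le> real (d + W)"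
    using d_pos W_pos unfolding n_def ncols_def by auto
  have w: "close_bdd B e (Wt (Suc l) i k) (Wt' (Suc l) i k)" if "k < n" for k
    using l i that by (intro weights_close) (auto simp: weight_idx_def n_def)
  have b: "close_bdd B e (bs (Suc l) i) (bs' (Suc l) i)"
    using l i by (intro biases_close) (auto simp: bias_idx_def)
  have zero: "close_bdd B e 0 0"
    using B_ge_1 e_nonneg by (simp add: close_bdd_def)
  have a: "act_close j l k A D" if "k < n" for k
    using act that unfolding n_def by blast
  have B0: "0 \<le> B" "0 \<le> B * D + A * e"
    using B_ge_1 A D e_nonneg by auto
  have widen: "close_bdd (real (d + W) * B * A) (real (d + W) * (B * D + A * e)) u u'"
    if "close_bdd (real (n + 1) * B * A) (real (n + 1) * (B * D + A * e)) u u'" for u u'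
    using n A B0 by (intro close_bdd_mono[OF that] mult_right_mono) auto
  have "close_bdd (real (d + W) * B * A) (real (d + W) * (B * D + A * e))
      (hval d W Wt bs x (Suc l) i) (hval d W Wt' bs' x (Suc l) i)"
    unfolding hval_Suc_act n_def[symmetric]
    by (intro widen close_bdd_affine[OF w _ b A D]) (use a in \<open>auto simp: act_close_def\<close>)
  moreover have "close_bdd (real (d + W) * B * A) (real (d + W) * (B * D + A * e))
      (hval_dx d W Wt bs x j (Suc l) i) (hval_dx d W Wt' bs' x j (Suc l) i)"
    using close_bdd_affine[OF w _ zero A D, of n] a
    by (intro widen) (auto simp: act_close_def n_def)
  moreover have "close_bdd (real (d + W) * B * A) (real (d + W) * (B * D + A * e))
      (hval_dxx d W Wt bs x j (Suc l) i) (hval_dxx d W Wt' bs' x j (Suc l) i)"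
    using close_bdd_affine[OF w _ zero A D, of n] a
    by (intro widen) (auto simp: act_close_def n_def)
  ultimately show ?thesis
    unfolding pre_close_def by blast
qed

lemma pre_close_first_layer:
  assumes "0 < L" and "i < nrows L W (Suc 0)"
  shows "pre_close j (Suc 0) i ((6 * real (d + W) * B) ^ 2) ((6 * real (d + W) * B) ^ 2 * e)"
proof -
  define P where "P = real (d + W) * B"
  have Q: "6 * real (d + W) * B = 6 * P"
    unfolding P_def by simp
  have P: "1 \<le> P" "real (d + W) \<le> P"
    using width_times_B_ge unfolding P_def by auto
  have "pre_close j (Suc 0) i (real (d + W) * B * 1) (real (d + W) * (B * 0 + 1 * e))"
    using assms act_close_input by (intro pre_close_Suc) (auto simp: ncols_def)
  moreover have "P \<le> (6 * P) ^ 2"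
    using P by (simp add: power2_eq_square)
  moreover have "real (d + W) * e \<le> (6 * P) ^ 2 * e"
    using P \<open>P \<le> (6 * P) ^ 2\<close> e_nonneg by (intro mult_right_mono) auto
  ultimately show ?thesis
    unfolding Q by (auto simp: P_def elim!: pre_close_mono)
qed

lemma pre_close_next_layer:
  assumes l: "Suc l < L" and i: "i < nrows L W (Suc (Suc l))" and R: "1 \<le> R"
    and prev: "\<And>k. k < W \<Longrightarrow> pre_close j (Suc l) k R (R * e)"
  shows "pre_close j (Suc (Suc l)) i ((6 * real (d + W) * B) ^ 2 * R ^ 3)
           ((6 * real (d + W) * B) ^ 2 * R ^ 3 * e)"
proof -
  define P where "P = real (d + W) * B"
  have Q: "6 * real (d + W) * B = 6 * P"
    unfolding P_def by simp
  have P: "1 \<le> P" "real (d + W) \<le> P"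
    using width_times_B_ge unfolding P_def by auto
  have "1 \<le> 9 * R ^ 3"
    using R one_le_power[of R 3] by linarith
  moreover have "act_close j (Suc l) k (9 * R ^ 3) (27 * R ^ 2 * (R * e))"
    if "k < ncols d W (Suc (Suc l))" for k
    using prev that by (intro act_close_if_pre_close) (auto simp: ncols_def)
  ultimately have "pre_close j (Suc (Suc l)) i (real (d + W) * B * (9 * R ^ 3))
      (real (d + W) * (B * (27 * R ^ 2 * (R * e)) + 9 * R ^ 3 * e))"
    using l i R e_nonneg by (intro pre_close_Suc) auto
  moreover have "real (d + W) * B * (9 * R ^ 3) \<le> (6 * P) ^ 2 * R ^ 3"
  proof -
    have "9 * P \<le> (6 * P) ^ 2"
      using P by (simp add: power2_eq_square)
    from mult_right_mono[OF this, of "R ^ 3"] R show ?thesis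
      unfolding P_def by simp
  qed
  moreover have "real (d + W) * (B * (27 * R ^ 2 * (R * e)) + 9 * R ^ 3 * e) \<le> (6 * P) ^ 2 * R ^ 3 * e"
  proof -
    have "real (d + W) * (27 * B + 9) \<le> 36 * P"
      using P(2) unfolding P_def by (simp add: algebra_simps)
    also have "\<dots> \<le> (6 * P) ^ 2"
      using P by (simp add: power2_eq_square)
    finally have "real (d + W) * (27 * B + 9) * (R ^ 3 * e) \<le> (6 * P) ^ 2 * (R ^ 3 * e)"
      using R e_nonneg by (intro mult_right_mono) auto
    then show ?thesis
      by (simp add: power2_eq_square power3_eq_cube algebra_simps)
  qed
  ultimately show ?thesis
    unfolding Q by (auto simp: P_def elim!: pre_close_mono)
qed

text \<open>With \<open>Q = 6 (d + W) B\<close>, one layer turns the bound \<open>R\<close> into \<open>Q^2 R^3\<close>, so the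
  exponent \<open>m\<close> of \<open>Q\<close> evolves as \<open>m \<mapsto> 3 m + 2\<close>.\<close>

lemma pre_close_layer:
  assumes "l < L" and "i < nrows L W (Suc l)"
  shows "pre_close j (Suc l) i ((6 * real (d + W) * B) ^ (3 ^ Suc l - 1))
           ((6 * real (d + W) * B) ^ (3 ^ Suc l - 1) * e)"
  using assms
proof (induction l arbitrary: i)
  case 0
  then show ?case
    using pre_close_first_layer by simp
next
  case (Suc l)
  have "1 \<le> (6 * real (d + W) * B) ^ (3 ^ Suc l - 1)"
    using width_times_B_ge by (intro one_le_power) linarith
  with Suc show ?case
    unfolding power_three_pow_Suc
    by (intro pre_close_next_layer) (auto simp: nrows_def)
qed

lemma laplacian_close:
  assumes "1 \<le> L"
  shows "\<bar>laplacian d (\<lambda>x. hval d W Wt bs x L 0) x - laplacian d (\<lambda>x. hval d W Wt' bs' x L 0) x\<bar>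
    \<le> real d * (6 * real (d + W) * B) ^ 3 ^ L * e"
proof -
  obtain l where L: "L = Suc l"
    using assms by (cases L) auto
  define Q where "Q = 6 * real (d + W) * B"
  have "1 \<le> Q"
    using width_times_B_ge unfolding Q_def by linarith
  then have "Q ^ (3 ^ L - 1) * e \<le> Q ^ 3 ^ L * e"
    using e_nonneg by (intro mult_right_mono power_increasing) auto
  moreover have "\<bar>hval_dxx d W Wt bs x j L 0 - hval_dxx d W Wt' bs' x j L 0\<bar> \<le> Q ^ (3 ^ L - 1) * e" for j
    using pre_close_layer[of l 0 j] unfolding L pre_close_def close_bdd_def Q_def by (simp add: nrows_def)
  ultimately have "\<bar>hval_dxx d W Wt bs x j L 0 - hval_dxx d W Wt' bs' x j L 0\<bar> \<le> Q ^ 3 ^ L * e" for j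
    by (meson order_trans)
  then have sum_bound: "(\<Sum>j<d. \<bar>hval_dxx d W Wt bs x j L 0 - hval_dxx d W Wt' bs' x j L 0\<bar>) \<le> real d * (Q ^ 3 ^ L * e)"
    using sum_bounded_above[of "{..<d}" "\<lambda>j. \<bar>hval_dxx d W Wt bs x j L 0 - hval_dxx d W Wt' bs' x j L 0\<bar>"]
    by simp
  have "\<bar>\<Sum>j<d. hval_dxx d W Wt bs x j L 0 - hval_dxx d W Wt' bs' x j L 0\<bar>
      \<le> (\<Sum>j<d. \<bar>hval_dxx d W Wt bs x j L 0 - hval_dxx d W Wt' bs' x j L 0\<bar>)"
    by (rule sum_abs)
  with sum_bound show ?thesis
    unfolding laplacian_hval Q_def sum_subtractf by simp
qed

end

section \<open>Counting quantized networks\<close>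

definition sparse_funs :: "'a set \<Rightarrow> real set \<Rightarrow> nat \<Rightarrow> ('a \<Rightarrow> real) set" where
  "sparse_funs I V S =
     {f. (\<forall>p. p \<notin> I \<longrightarrow> f p = 0) \<and> (\<forall>p\<in>I. f p \<in> V) \<and> card {p\<in>I. f p \<noteq> 0} \<le> S}"

lemma sparse_funs_Suc_subset:
  assumes "finite I" and "0 \<in> V"
  shows "sparse_funs I V (Suc S) \<subseteq>
    sparse_funs I V S \<union> (\<lambda>(g, p, v). g(p := v)) ` (sparse_funs I V S \<times> I \<times> V)"
proof
  fix f assume f: "f \<in> sparse_funs I V (Suc S)"
  show "f \<in> sparse_funs I V S \<union> (\<lambda>(g, p, v). g(p := v)) ` (sparse_funs I V S \<times> I \<times> V)"
  proof (cases "card {p\<in>I. f p \<noteq> 0} \<le> S")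
    case True
    with f show ?thesis
      unfolding sparse_funs_def by (intro UnI1) simp
  next
    case False
    then have "{p\<in>I. f p \<noteq> 0} \<noteq> {}"
      by (intro notI) simp
    then obtain p where p: "p \<in> I" "f p \<noteq> 0"
      by blast
    define g where "g = f(p := 0)"
    have "{q\<in>I. g q \<noteq> 0} = {q\<in>I. f q \<noteq> 0} - {p}"
      unfolding g_def by auto
    then have "card {q\<in>I. g q \<noteq> 0} = card {q\<in>I. f q \<noteq> 0} - 1"
      using p assms(1) by simp
    then have "g \<in> sparse_funs I V S"
      using f assms(2) unfolding sparse_funs_def g_def by auto
    moreover have "f = g(p := f p)" and "f p \<in> V"
      using f p unfolding g_def sparse_funs_def by auto
    ultimately show ?thesis
      using p by (intro UnI2 image_eqI[where x = "(g, p, f p)"]) auto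
  qed
qed

lemma finite_card_sparse_funs:
  assumes "finite I" and "finite V" and "0 \<in> V"
  shows "finite (sparse_funs I V S) \<and> card (sparse_funs I V S) \<le> (card I * card V + 1) ^ S"
proof (induction S)
  case 0
  have sub: "sparse_funs I V 0 \<subseteq> {\<lambda>p. 0}"
    using assms(1) unfolding sparse_funs_def by fastforce
  have "card (sparse_funs I V 0) \<le> card {\<lambda>p::'a. 0::real}"
    by (rule card_mono[OF _ sub]) simp
  then show ?case
    using finite_subset[OF sub] by simp
next
  case (Suc S)
  let ?F = "sparse_funs I V S"
  let ?G = "(\<lambda>(g, p, v). g(p := v)) ` (?F \<times> I \<times> V)"
  have fin: "finite (?F \<union> ?G)"
    using Suc.IH assms by auto
  have "card (sparse_funs I V (Suc S)) \<le> card (?F \<union> ?G)"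
    by (rule card_mono[OF fin sparse_funs_Suc_subset[OF assms(1,3)]])
  also have "\<dots> \<le> card ?F + card ?F * (card I * card V)"
    using card_Un_le[of ?F ?G] card_image_le[of "?F \<times> I \<times> V" "\<lambda>(g, p, v). g(p := v)"] Suc.IH assms
    by (simp add: card_cartesian_product)
  also have "\<dots> = card ?F * (card I * card V + 1)"
    by (simp add: algebra_simps)
  also have "\<dots> \<le> (card I * card V + 1) ^ Suc S"
    using Suc.IH by (metis mult_le_mono1 power_Suc2)
  finally show ?case
    using finite_subset[OF sparse_funs_Suc_subset[OF assms(1,3)] fin] by blast
qed

text \<open>Rounding towards zero, rather than to the nearest grid point, preserves both the
  weight bound and the sparsity of a network.\<close>

definition quantize :: "real \<Rightarrow> real \<Rightarrow> real" where
  "quantize \<epsilon> w = (if 0 \<le> w then \<epsilon> * of_int \<lfloor>w / \<epsilon>\<rfloor> else - (\<epsilon> * of_int \<lfloor>- w / \<epsilon>\<rfloor>))"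

definition grid :: "real \<Rightarrow> real \<Rightarrow> real set" where
  "grid \<epsilon> B = (\<lambda>k. \<epsilon> * of_int k) ` {- \<lfloor>B / \<epsilon>\<rfloor>..\<lfloor>B / \<epsilon>\<rfloor>}"

lemma quantize_zero [simp]: "quantize \<epsilon> 0 = 0"
  by (simp add: quantize_def)

lemma quantize_nonneg:
  assumes "0 < \<epsilon>" and "0 \<le> w" and "w \<le> B"
  shows "close_bdd B \<epsilon> w (quantize \<epsilon> w)" and "quantize \<epsilon> w \<in> grid \<epsilon> B"
proof -
  have k: "of_int \<lfloor>w / \<epsilon>\<rfloor> \<le> w / \<epsilon>" "w / \<epsilon> < of_int \<lfloor>w / \<epsilon>\<rfloor> + 1" "0 \<le> \<lfloor>w / \<epsilon>\<rfloor>"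
    using assms by auto
  have "\<epsilon> * of_int \<lfloor>w / \<epsilon>\<rfloor> \<le> w"
    using mult_left_mono[OF k(1), of \<epsilon>] assms(1) by simp
  moreover have "w < \<epsilon> * of_int \<lfloor>w / \<epsilon>\<rfloor> + \<epsilon>" "0 \<le> \<epsilon> * of_int \<lfloor>w / \<epsilon>\<rfloor>"
    using k assms(1) by (simp_all add: field_simps)
  ultimately show "close_bdd B \<epsilon> w (quantize \<epsilon> w)"
    using assms unfolding close_bdd_def quantize_def by auto
  have "\<lfloor>w / \<epsilon>\<rfloor> \<le> \<lfloor>B / \<epsilon>\<rfloor>"
    using assms by (intro floor_mono divide_right_mono) auto
  with k(3) have "\<lfloor>w / \<epsilon>\<rfloor> \<in> {- \<lfloor>B / \<epsilon>\<rfloor>..\<lfloor>B / \<epsilon>\<rfloor>}"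
    unfolding atLeastAtMost_iff by linarith
  then show "quantize \<epsilon> w \<in> grid \<epsilon> B"
    using assms(2) unfolding quantize_def grid_def by (simp add: rev_image_eqI)
qed

lemma quantize_close:
  assumes "0 < \<epsilon>" and "\<bar>w\<bar> \<le> B"
  shows "close_bdd B \<epsilon> w (quantize \<epsilon> w)" and "quantize \<epsilon> w \<in> grid \<epsilon> B"
proof (atomize (full), cases "0 \<le> w")
  case True
  then show "close_bdd B \<epsilon> w (quantize \<epsilon> w) \<and> quantize \<epsilon> w \<in> grid \<epsilon> B"
    using quantize_nonneg[of \<epsilon> w B] assms by simp
next
  case False
  then have q: "quantize \<epsilon> w = - quantize \<epsilon> (- w)"
    unfolding quantize_def by simp
  have "close_bdd B \<epsilon> (- w) (quantize \<epsilon> (- w))" "quantize \<epsilon> (- w) \<in> grid \<epsilon> B"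
    using quantize_nonneg[of \<epsilon> "- w" B] assms False by auto
  moreover have "- y \<in> grid \<epsilon> B" if "y \<in> grid \<epsilon> B" for y
    using that unfolding grid_def by (auto intro!: image_eqI[where x = "- _"])
  ultimately show "close_bdd B \<epsilon> w (quantize \<epsilon> w) \<and> quantize \<epsilon> w \<in> grid \<epsilon> B"
    unfolding q close_bdd_def by auto
qed

lemma finite_grid: "finite (grid \<epsilon> B)"
  unfolding grid_def by simp

lemma card_grid_le:
  assumes "0 < \<epsilon>" and "0 \<le> B"
  shows "real (card (grid \<epsilon> B)) \<le> 2 * B / \<epsilon> + 1"
proof -
  have k: "0 \<le> \<lfloor>B / \<epsilon>\<rfloor>"
    using assms by simp
  have "card (grid \<epsilon> B) \<le> card {- \<lfloor>B / \<epsilon>\<rfloor>..\<lfloor>B / \<epsilon>\<rfloor>}"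
    unfolding grid_def by (rule card_image_le) simp
  also have "\<dots> = nat (2 * \<lfloor>B / \<epsilon>\<rfloor> + 1)"
    by simp
  finally have "real (card (grid \<epsilon> B)) \<le> real (nat (2 * \<lfloor>B / \<epsilon>\<rfloor> + 1))"
    by (simp only: of_nat_le_iff)
  also have "\<dots> = 2 * of_int \<lfloor>B / \<epsilon>\<rfloor> + 1"
    using k by simp
  also have "\<dots> \<le> 2 * B / \<epsilon> + 1"
    by linarith
  finally show ?thesis .
qed

lemma quantize_sparse:
  assumes "0 < \<epsilon>" and "finite I" and "card {p\<in>I. f p \<noteq> 0} \<le> S" and "\<forall>p\<in>I. \<bar>f p\<bar> \<le> B"
  defines "g \<equiv> \<lambda>p. if p \<in> I then quantize \<epsilon> (f p) else 0"
  shows "g \<in> sparse_funs I (grid \<epsilon> B) S" and "p \<in> I \<Longrightarrow> close_bdd B \<epsilon> (f p) (g p)"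
proof -
  have "card {p\<in>I. g p \<noteq> 0} \<le> card {p\<in>I. f p \<noteq> 0}"
    using assms(2) unfolding g_def by (intro card_mono) (auto elim: contrapos_nn)
  then show "g \<in> sparse_funs I (grid \<epsilon> B) S"
    using assms quantize_close(2) unfolding sparse_funs_def g_def by auto
  show "p \<in> I \<Longrightarrow> close_bdd B \<epsilon> (f p) (g p)"
    using assms quantize_close(1) unfolding g_def by auto
qed

lemma zero_in_grid: "0 \<le> B \<Longrightarrow> 0 < \<epsilon> \<Longrightarrow> 0 \<in> grid \<epsilon> B"
  unfolding grid_def by (intro image_eqI[where x = 0]) auto

definition param_idx :: "nat \<Rightarrow> nat \<Rightarrow> nat \<Rightarrow> ((nat \<times> nat \<times> nat) + (nat \<times> nat)) set" where
  "param_idx d L W = weight_idx d L W <+> bias_idx L W"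

definition flat_params :: "(nat \<Rightarrow> nat \<Rightarrow> nat \<Rightarrow> real) \<Rightarrow> (nat \<Rightarrow> nat \<Rightarrow> real)
    \<Rightarrow> (nat \<times> nat \<times> nat) + (nat \<times> nat) \<Rightarrow> real" where
  "flat_params Wt bs = case_sum (\<lambda>(l, i, k). Wt l i k) (\<lambda>(l, i). bs l i)"

definition admissible :: "nat \<Rightarrow> nat \<Rightarrow> nat \<Rightarrow> nat \<Rightarrow> real
    \<Rightarrow> (nat \<Rightarrow> nat \<Rightarrow> nat \<Rightarrow> real) \<Rightarrow> (nat \<Rightarrow> nat \<Rightarrow> real) \<Rightarrow> bool" where
  "admissible d L W S B Wt bs \<longleftrightarrow>
     card {p \<in> param_idx d L W. flat_params Wt bs p \<noteq> 0} \<le> S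
   \<and> (\<forall>p\<in>param_idx d L W. \<bar>flat_params Wt bs p\<bar> \<le> B)"

lemma weight_idx_subset: "weight_idx d L W \<subseteq> {..L} \<times> {..<W + 1} \<times> {..<d + W}"
  unfolding weight_idx_def nrows_def ncols_def by (auto split: if_splits)

lemma bias_idx_subset: "bias_idx L W \<subseteq> {..L} \<times> {..<W + 1}"
  unfolding bias_idx_def nrows_def by (auto split: if_splits)

lemma finite_weight_idx: "finite (weight_idx d L W)"
  using finite_subset[OF weight_idx_subset] by simp

lemma finite_bias_idx: "finite (bias_idx L W)"
  using finite_subset[OF bias_idx_subset] by simp

lemma finite_param_idx: "finite (param_idx d L W)"
  unfolding param_idx_def using finite_weight_idx finite_bias_idx by simp

lemma card_param_idx_le: "card (param_idx d L W) \<le> (L + 1) * (W + 1) * (d + W + 1)"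
proof -
  have "card (weight_idx d L W) \<le> card ({..L} \<times> {..<W + 1} \<times> {..<d + W})"
    by (rule card_mono[OF _ weight_idx_subset]) simp
  moreover have "card (bias_idx L W) \<le> card ({..L} \<times> {..<W + 1})"
    by (rule card_mono[OF _ bias_idx_subset]) simp
  ultimately show ?thesis
    unfolding param_idx_def using finite_weight_idx finite_bias_idx
    by (simp add: card_Plus card_cartesian_product algebra_simps)
qed

lemma inj_flat_params: "inj (\<lambda>(Wt, bs). flat_params Wt bs)"
proof (rule injI, clarify)
  fix Wt Wt' bs bs' assume eq: "flat_params Wt bs = flat_params Wt' bs'"
  have "Wt l i k = Wt' l i k" for l i k
    using fun_cong[OF eq, of "Inl (l, i, k)"] by (simp add: flat_params_def)
  moreover have "bs l i = bs' l i" for l i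
    using fun_cong[OF eq, of "Inr (l, i)"] by (simp add: flat_params_def)
  ultimately show "Wt = Wt' \<and> bs = bs'"
    by (simp add: fun_eq_iff)
qed

lemma ball_Plus_iff: "(\<forall>p\<in>A <+> B. P p) \<longleftrightarrow> (\<forall>a\<in>A. P (Inl a)) \<and> (\<forall>b\<in>B. P (Inr b))"
  by auto

lemma Phi_eq_admissible:
  "Phi d L W S B = {(\<lambda>x. hval d W Wt bs x L 0) | Wt bs. admissible d L W S B Wt bs}"
proof -
  have "{p \<in> param_idx d L W. flat_params Wt bs p \<noteq> 0} =
      {(l, i, k) \<in> weight_idx d L W. Wt l i k \<noteq> 0} <+> {(l, i) \<in> bias_idx L W. bs l i \<noteq> 0}" for Wt bs
    unfolding param_idx_def flat_params_def by auto
  note supp = this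
  have "card {p \<in> param_idx d L W. flat_params Wt bs p \<noteq> 0} =
      card {(l, i, k) \<in> weight_idx d L W. Wt l i k \<noteq> 0} + card {(l, i) \<in> bias_idx L W. bs l i \<noteq> 0}"
    for Wt bs
  proof -
    have "finite {(l, i, k) \<in> weight_idx d L W. Wt l i k \<noteq> 0}" "finite {(l, i) \<in> bias_idx L W. bs l i \<noteq> 0}"
      by (auto intro: finite_subset[OF _ finite_weight_idx] finite_subset[OF _ finite_bias_idx])
    with supp show ?thesis
      by (simp add: card_Plus)
  qed
  moreover have "(\<forall>p\<in>param_idx d L W. \<bar>flat_params Wt bs p\<bar> \<le> B) \<longleftrightarrow>
      (\<forall>(l, i, k) \<in> weight_idx d L W. \<bar>Wt l i k\<bar> \<le> B) \<and> (\<forall>(l, i) \<in> bias_idx L W. \<bar>bs l i\<bar> \<le> B)"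
    for Wt bs
    unfolding param_idx_def ball_Plus_iff flat_params_def by auto
  ultimately show ?thesis
    unfolding Phi_def admissible_def by auto
qed

definition qweights :: "nat \<Rightarrow> nat \<Rightarrow> nat \<Rightarrow> real \<Rightarrow> (nat \<Rightarrow> nat \<Rightarrow> nat \<Rightarrow> real)
    \<Rightarrow> nat \<Rightarrow> nat \<Rightarrow> nat \<Rightarrow> real" where
  "qweights d L W \<epsilon> Wt l i k = (if (l, i, k) \<in> weight_idx d L W then quantize \<epsilon> (Wt l i k) else 0)"

definition qbiases :: "nat \<Rightarrow> nat \<Rightarrow> real \<Rightarrow> (nat \<Rightarrow> nat \<Rightarrow> real) \<Rightarrow> nat \<Rightarrow> nat \<Rightarrow> real" where
  "qbiases L W \<epsilon> bs l i = (if (l, i) \<in> bias_idx L W then quantize \<epsilon> (bs l i) else 0)"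

lemma flat_params_quantized:
  "flat_params (qweights d L W \<epsilon> Wt) (qbiases L W \<epsilon> bs) =
     (\<lambda>p. if p \<in> param_idx d L W then quantize \<epsilon> (flat_params Wt bs p) else 0)"
  by (auto simp: fun_eq_iff flat_params_def qweights_def qbiases_def param_idx_def split: sum.split)

lemma quantized_admissible:
  assumes "0 < \<epsilon>" and "admissible d L W S B Wt bs"
  shows "admissible d L W S B (qweights d L W \<epsilon> Wt) (qbiases L W \<epsilon> bs)"
    and "flat_params (qweights d L W \<epsilon> Wt) (qbiases L W \<epsilon> bs) \<in> sparse_funs (param_idx d L W) (grid \<epsilon> B) S"
    and "p \<in> param_idx d L W \<Longrightarrow>
      close_bdd B \<epsilon> (flat_params Wt bs p) (flat_params (qweights d L W \<epsilon> Wt) (qbiases L W \<epsilon> bs) p)"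
proof -
  note q = quantize_sparse[OF assms(1) finite_param_idx[of d L W], where f = "flat_params Wt bs"
      and S = S and B = B, folded flat_params_quantized]
  show sparse: "flat_params (qweights d L W \<epsilon> Wt) (qbiases L W \<epsilon> bs) \<in> sparse_funs (param_idx d L W) (grid \<epsilon> B) S"
    using q(1) assms(2) unfolding admissible_def by blast
  show close: "close_bdd B \<epsilon> (flat_params Wt bs p) (flat_params (qweights d L W \<epsilon> Wt) (qbiases L W \<epsilon> bs) p)"
    if "p \<in> param_idx d L W" for p
    using q(2) assms(2) that unfolding admissible_def flat_params_quantized by auto
  show "admissible d L W S B (qweights d L W \<epsilon> Wt) (qbiases L W \<epsilon> bs)"
    using sparse close unfolding admissible_def sparse_funs_def close_bdd_def by blast
qed

section \<open>Covering numbers\<close>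

lemma covering_number_le_card:
  assumes "finite C" and "C \<subseteq> A" and "\<And>g. g \<in> A \<Longrightarrow> \<exists>c\<in>C. \<forall>x\<in>Omega d. \<bar>g x - c x\<bar> \<le> \<delta>"
  shows "covering_number d \<delta> A \<le> enat (card C)"
proof -
  have "(\<lambda>_. 0) \<in> Omega d"
    unfolding Omega_def by simp
  then have "\<exists>c\<in>C. sup_norm_Omega d (\<lambda>x. g x - c x) \<le> \<delta>" if "g \<in> A" for g
    using assms(3)[OF that] unfolding sup_norm_Omega_def by (blast intro: cSUP_least)
  with assms(1,2) show ?thesis
    unfolding covering_number_def by (intro INF_lower) auto
qed

lemma laplacian_quantized_close:
  assumes "1 \<le> d" and "1 \<le> W" and "1 \<le> B" and "1 \<le> L" and "0 < \<epsilon>"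
    and adm: "admissible d L W S B Wt bs" and x: "x \<in> Omega d"
  shows "\<bar>laplacian d (\<lambda>x. hval d W Wt bs x L 0) x
      - laplacian d (\<lambda>x. hval d W (qweights d L W \<epsilon> Wt) (qbiases L W \<epsilon> bs) x L 0) x\<bar>
    \<le> real d * (6 * real (d + W) * B) ^ 3 ^ L * \<epsilon>"
proof -
  note close = quantized_admissible(3)[OF assms(5) adm]
  interpret close_networks d L W B \<epsilon> Wt "qweights d L W \<epsilon> Wt" bs "qbiases L W \<epsilon> bs" x
  proof
    show "close_bdd B \<epsilon> (Wt l i k) (qweights d L W \<epsilon> Wt l i k)" if "(l, i, k) \<in> weight_idx d L W" for l i k
      using close[of "Inl (l, i, k)"] that by (simp add: param_idx_def flat_params_def InlI)
    show "close_bdd B \<epsilon> (bs l i) (qbiases L W \<epsilon> bs l i)" if "(l, i) \<in> bias_idx L W" for l i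
      using close[of "Inr (l, i)"] that by (simp add: param_idx_def flat_params_def InrI)
  qed (use assms in auto)
  show ?thesis
    using laplacian_close[OF assms(4)] .
qed

text \<open>The Laplacians of the quantized admissible networks form the cover; they are
  injectively indexed by sparse grid-valued parameter vectors.\<close>

lemma covering_number_laplacian_Phi_le:
  assumes "1 \<le> d" and "1 \<le> W" and "1 \<le> B" and "1 \<le> L" and "0 < \<epsilon>"
  shows "covering_number d (real d * (6 * real (d + W) * B) ^ 3 ^ L * \<epsilon>) (laplacian d ` Phi d L W S B)
    \<le> enat ((card (param_idx d L W) * card (grid \<epsilon> B) + 1) ^ S)"
proof -
  let ?quantize = "\<lambda>(Wt, bs). (qweights d L W \<epsilon> Wt, qbiases L W \<epsilon> bs)"
  let ?net = "\<lambda>(Wt, bs). laplacian d (\<lambda>x. hval d W Wt bs x L 0)"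
  define Q where "Q = ?quantize ` {(Wt, bs). admissible d L W S B Wt bs}"
  define F where "F = sparse_funs (param_idx d L W) (grid \<epsilon> B) S"
  have F: "finite F" "card F \<le> (card (param_idx d L W) * card (grid \<epsilon> B) + 1) ^ S"
    using finite_card_sparse_funs[OF finite_param_idx finite_grid zero_in_grid] assms
    unfolding F_def by auto
  have QF: "(\<lambda>(Wt, bs). flat_params Wt bs) ` Q \<subseteq> F"
    using quantized_admissible(2)[OF assms(5)] unfolding Q_def F_def by auto
  have inj: "inj_on (\<lambda>(Wt, bs). flat_params Wt bs) Q"
    using inj_flat_params by (rule inj_on_subset) simp
  have "finite Q" and "card Q \<le> card F"
    using inj_on_finite[OF inj QF F(1)] card_inj_on_le[OF inj QF F(1)] by auto
  moreover have "?net ` Q \<subseteq> laplacian d ` Phi d L W S B"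
    using quantized_admissible(1)[OF assms(5)] unfolding Q_def Phi_eq_admissible by fastforce
  moreover have "\<exists>c\<in>?net ` Q. \<forall>x\<in>Omega d. \<bar>g x - c x\<bar> \<le> real d * (6 * real (d + W) * B) ^ 3 ^ L * \<epsilon>"
    if g_in: "g \<in> laplacian d ` Phi d L W S B" for g
  proof -
    obtain Wt bs where adm: "admissible d L W S B Wt bs"
      and g: "g = laplacian d (\<lambda>x. hval d W Wt bs x L 0)"
      using g_in unfolding Phi_eq_admissible by blast
    have "?net (?quantize (Wt, bs)) \<in> ?net ` Q"
      using adm unfolding Q_def by blast
    then show ?thesis
      unfolding g using laplacian_quantized_close[OF assms adm] by fastforce
  qed
  ultimately have "covering_number d (real d * (6 * real (d + W) * B) ^ 3 ^ L * \<epsilon>)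
      (laplacian d ` Phi d L W S B) \<le> enat (card (?net ` Q))"
    by (intro covering_number_le_card) auto
  also have "\<dots> \<le> enat (card F)"
    using card_image_le[OF \<open>finite Q\<close>, of ?net] \<open>card Q \<le> card F\<close> by simp
  finally show ?thesis
    using F(2) order_trans by fastforce
qed

lemma card_param_idx_le_cube:
  assumes "real (L + 1) \<le> R" and "real (W + 1) \<le> R" and "real (d + W + 1) \<le> R"
  shows "real (card (param_idx d L W)) \<le> R ^ 3"
proof -
  have "real (card (param_idx d L W)) \<le> real (L + 1) * real (W + 1) * real (d + W + 1)"
    using card_param_idx_le[of d L W] by (simp only: of_nat_le_iff of_nat_mult[symmetric])
  also have "\<dots> \<le> R * R * R"
    using assms by (intro mult_mono) auto
  finally show ?thesis
    by (simp add: power3_eq_cube)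
qed

lemma card_grid_le_power:
  fixes t :: nat
  assumes \<delta>: "0 < \<delta>" "\<delta> \<le> 1" and "1 \<le> B" and "1 \<le> a" and "0 < Q"
    and R: "B \<le> R" "a \<le> R" "Q \<le> R"
  shows "real (card (grid (\<delta> / (a * Q ^ t)) B)) \<le> 3 * (R ^ (t + 2) / \<delta>)"
proof -
  have "0 < \<delta> / (a * Q ^ t)"
    using assms by simp
  then have "real (card (grid (\<delta> / (a * Q ^ t)) B)) \<le> 2 * (B * a * Q ^ t) / \<delta> + 1"
    using card_grid_le[of "\<delta> / (a * Q ^ t)" B] assms by (simp add: field_simps)
  also have "\<dots> \<le> 2 * (R * R * R ^ t) / \<delta> + 1"
    using assms by (intro add_right_mono divide_right_mono mult_left_mono mult_mono power_mono) auto
  also have "\<dots> \<le> 3 * (R ^ (t + 2) / \<delta>)"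
  proof -
    have R1: "1 \<le> R ^ (t + 2)"
      using assms by (intro one_le_power) auto
    also have "\<dots> \<le> R ^ (t + 2) / \<delta>"
      using \<delta> R1 by (simp add: le_divide_eq mult_left_le)
    moreover have "2 * (R * R * R ^ t) / \<delta> = 2 * (R ^ (t + 2) / \<delta>)"
      by (simp add: power_add power2_eq_square mult_ac)
    ultimately show ?thesis
      by linarith
  qed
  finally show ?thesis .
qed

lemma network_size_le:
  fixes c1 :: real
  assumes d: "1 \<le> d" and W: "2 \<le> W" and B: "1 \<le> B" and L: "1 \<le> L" "real L \<le> c1"
  defines "R \<equiv> 6 * (c1 + 1) * (real d + 1) * (real W * B)"
  shows "real (L + 1) \<le> R" and "real (d + W + 1) \<le> R" and "B \<le> R" and "real d \<le> R"
    and "6 * real (d + W) * B \<le> R" and "4 \<le> R"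
proof -
  define M where "M = (real d + 1) * (real W * B)"
  have "d * 2 \<le> d * W"
    using W by (rule mult_le_mono2)
  then have "d + W + 1 \<le> d * W + W"
    using d by linarith
  then have dW: "real (d + W + 1) \<le> (real d + 1) * real W"
    by (simp add: algebra_simps flip: of_nat_add of_nat_mult)
  have "(real d + 1) * real W \<le> M"
    using mult_left_mono[OF B, of "real W"] unfolding M_def by (intro mult_left_mono) auto
  with dW have M: "real (d + W + 1) \<le> M"
    by linarith
  have "B \<le> M"
    using d W B mult_mono[of 1 "real d + 1" B "real W * B"] unfolding M_def by simp
  have "6 * real (d + W) * B \<le> 6 * M"
    using dW B unfolding M_def by (simp add: algebra_simps)
  have R_eq: "R = (c1 + 1) * (6 * M)"
    unfolding R_def M_def by (simp add: algebra_simps)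
  have "1 \<le> c1 + 1" "1 \<le> 6 * M"
    using L M by auto
  then have "6 * M \<le> R" "c1 + 1 \<le> R"
    unfolding R_eq using mult_right_mono[of 1 "c1 + 1" "6 * M"] mult_left_mono[of 1 "6 * M" "c1 + 1"]
    by auto
  with L(2) M d W \<open>B \<le> M\<close> \<open>6 * real (d + W) * B \<le> 6 * M\<close>
  show "real (L + 1) \<le> R" "real (d + W + 1) \<le> R" "B \<le> R" "real d \<le> R"
    "6 * real (d + W) * B \<le> R" "4 \<le> R"
    by auto
qed

lemma card_quantized_networks_le:
  fixes c1 :: real
  assumes d: "1 \<le> d" and W: "2 \<le> W" and B: "1 \<le> B" and L: "1 \<le> L" "real L \<le> c1"
    and \<delta>: "0 < \<delta>" "\<delta> \<le> 1"
  defines "\<epsilon> \<equiv> \<delta> / (real d * (6 * real (d + W) * B) ^ 3 ^ L)"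
    and "R \<equiv> 6 * (c1 + 1) * (real d + 1) * (real W * B)"
  shows "real (card (param_idx d L W) * card (grid \<epsilon> B) + 1) \<le> R ^ (3 * 3 ^ L) / \<delta>"
proof -
  define t :: nat where "t = 3 ^ L"
  note R = network_size_le[OF d W B L, folded R_def]
  have t: "3 \<le> t"
    using power_increasing[OF L(1), of "3::nat"] unfolding t_def by simp
  have "real (card (param_idx d L W)) \<le> R ^ 3"
    using R W by (intro card_param_idx_le_cube) auto
  moreover have "real (card (grid \<epsilon> B)) \<le> 3 * (R ^ (t + 2) / \<delta>)"
    unfolding \<epsilon>_def t_def using R d B \<delta> by (intro card_grid_le_power) auto
  ultimately have "real (card (param_idx d L W)) * real (card (grid \<epsilon> B)) \<le> R ^ 3 * (3 * (R ^ (t + 2) / \<delta>))"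
    using R by (intro mult_mono) auto
  moreover have "R ^ 3 * (3 * (R ^ (t + 2) / \<delta>)) = 3 * (R ^ (t + 5) / \<delta>)"
    by (simp add: power_add mult_ac numeral_eq_Suc)
  ultimately have "real (card (param_idx d L W) * card (grid \<epsilon> B) + 1) \<le> 3 * (R ^ (t + 5) / \<delta>) + 1"
    by (simp only: of_nat_add of_nat_mult of_nat_1)
  also have "\<dots> \<le> R * (R ^ (t + 5) / \<delta>)"
  proof -
    have R1: "1 \<le> R ^ (t + 5)"
      using R by (intro one_le_power) auto
    also have "\<dots> \<le> R ^ (t + 5) / \<delta>"
      using \<delta> R1 by (simp add: le_divide_eq mult_left_le)
    finally show ?thesis
      using R(6) mult_right_mono[of 4 R "R ^ (t + 5) / \<delta>"] by linarith
  qed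
  also have "\<dots> = R ^ Suc (t + 5) / \<delta>"
    by (simp only: power_Suc times_divide_eq_right)
  also have "\<dots> \<le> R ^ (3 * t) / \<delta>"
    using R t \<delta> by (intro divide_right_mono power_increasing) auto
  finally show ?thesis
    unfolding t_def .
qed

lemma covering_number_laplacian_Phi_le_power:
  fixes c1 :: real
  assumes d: "1 \<le> d" and W: "2 \<le> W" and B: "1 \<le> B" and L: "1 \<le> L" "real L \<le> c1"
    and \<delta>: "0 < \<delta>" "\<delta> \<le> 1"
  defines "R \<equiv> 6 * (c1 + 1) * (real d + 1) * (real W * B)"
  obtains k where "covering_number d \<delta> (laplacian d ` Phi d L W S B) = enat k"
    and "real k \<le> (R ^ (3 * 3 ^ L) / \<delta>) ^ S"
proof -
  define X where "X = real d * (6 * real (d + W) * B) ^ 3 ^ L"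
  define N where "N = card (param_idx d L W) * card (grid (\<delta> / X) B) + 1"
  have "0 < X"
    using d B unfolding X_def by simp
  then have eq: "real d * (6 * real (d + W) * B) ^ 3 ^ L * (\<delta> / X) = \<delta>" and "0 < \<delta> / X"
    using \<delta> unfolding X_def[symmetric] by simp_all
  then have "covering_number d \<delta> (laplacian d ` Phi d L W S B) \<le> enat (N ^ S)"
    using covering_number_laplacian_Phi_le[of d W B L "\<delta> / X" S] d W B L(1)
    unfolding eq N_def by simp
  then obtain k where k: "covering_number d \<delta> (laplacian d ` Phi d L W S B) = enat k" "k \<le> N ^ S"
    by (metis enat_ile enat_ord_simps(1))
  have "real k \<le> real N ^ S"
    using k(2) by (metis of_nat_le_iff of_nat_power)
  also have "\<dots> \<le> (R ^ (3 * 3 ^ L) / \<delta>) ^ S"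
    using card_quantized_networks_le[OF d W B L \<delta>] unfolding N_def R_def X_def
    by (intro power_mono) auto
  finally show ?thesis
    using that k(1) by blast
qed

lemma ln_mult_le:
  fixes a y :: real
  assumes "1 \<le> a" and "2 \<le> y"
  shows "ln (a * y) \<le> (1 + ln a / ln 2) * ln y"
proof -
  have "ln a = ln a / ln 2 * ln 2"
    by simp
  also have "\<dots> \<le> ln a / ln 2 * ln y"
    using assms by (intro mult_left_mono) auto
  finally show ?thesis
    using assms by (simp add: ln_mult algebra_simps)
qed

lemma ln_le_of_le_power:
  fixes R \<delta> :: real
  assumes "real k \<le> (R ^ m / \<delta>) ^ S" and "1 \<le> R" and "0 < \<delta>" and "\<delta> \<le> 1"
  shows "ln (real k) \<le> real S * (ln (1 / \<delta>) + real m * ln R)"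
proof (cases "k = 0")
  case False
  then have "ln (real k) \<le> ln ((R ^ m / \<delta>) ^ S)"
    using assms by simp
  also have "\<dots> = real S * (ln (1 / \<delta>) + real m * ln R)"
    using assms by (simp add: ln_div ln_realpow)
  finally show ?thesis .
qed (use assms in simp)

lemma ln_covering_number_laplacian_Phi_le:
  fixes c1 :: real
  assumes d: "1 \<le> d" and L: "1 \<le> L" "real L \<le> c1" and W: "2 \<le> W" and B: "1 \<le> B"
    and \<delta>: "0 < \<delta>" "\<delta> < 1"
  defines "K \<equiv> 1 + ln (6 * (c1 + 1) * (real d + 1)) / ln 2"
  shows "covering_number d \<delta> (laplacian d ` Phi d L W S B) \<noteq> \<infinity> \<and>
    ln (real (the_enat (covering_number d \<delta> (laplacian d ` Phi d L W S B))))
      \<le> 3 * K * real S * (ln (1 / \<delta>) + 3 ^ L * ln (real W * B))"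
proof -
  define R where "R = 6 * (c1 + 1) * (real d + 1) * (real W * B)"
  define t :: real where "t = 3 ^ L"
  have "\<delta> \<le> 1"
    using \<delta> by simp
  then obtain k where k: "covering_number d \<delta> (laplacian d ` Phi d L W S B) = enat k"
    and kR: "real k \<le> (R ^ (3 * 3 ^ L) / \<delta>) ^ S"
    using covering_number_laplacian_Phi_le_power[OF d W B L \<delta>(1), of S] unfolding R_def by blast
  have a: "1 \<le> 6 * (c1 + 1) * (real d + 1)"
    using L mult_mono[of 1 "6 * (c1 + 1)" 1 "real d + 1"] by simp
  have WB: "2 \<le> real W * B"
    using W B mult_mono[of 2 "real W" 1 B] by auto
  have "1 \<le> R"
    using a WB mult_mono[of 1 "6 * (c1 + 1) * (real d + 1)" 1 "real W * B"] unfolding R_def by simp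
  with kR \<delta> \<open>\<delta> \<le> 1\<close> have "ln (real k) \<le> real S * (ln (1 / \<delta>) + 3 * t * ln R)"
    unfolding t_def using ln_le_of_le_power[of k R "3 * 3 ^ L" \<delta> S] by simp
  also have "\<dots> \<le> real S * (ln (1 / \<delta>) + 3 * t * (K * ln (real W * B)))"
    using ln_mult_le[OF a WB] unfolding t_def R_def K_def by (intro mult_left_mono add_left_mono) auto
  also have "\<dots> \<le> 3 * K * real S * (ln (1 / \<delta>) + t * ln (real W * B))"
  proof -
    have "1 \<le> K"
      using a unfolding K_def by simp
    then have "ln (1 / \<delta>) \<le> 3 * K * ln (1 / \<delta>)"
      using mult_right_mono[of 1 "3 * K" "ln (1 / \<delta>)"] \<delta> by simp
    then have "ln (1 / \<delta>) + 3 * t * (K * ln (real W * B)) \<le> 3 * K * (ln (1 / \<delta>) + t * ln (real W * B))"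
      by (simp add: algebra_simps)
    from mult_left_mono[OF this, of "real S"] show ?thesis
      by (simp add: mult_ac)
  qed
  finally show ?thesis
    using k unfolding t_def by simp
qed

theorem mainTheorem19:
  fixes d :: nat and c1 :: real
  assumes "d \<ge> 1" and "c1 > 0"
  shows "\<exists>C>0. \<forall>c2>0. \<exists>N0. \<forall>N::real\<ge>N0. \<forall>(L::nat) (W::nat) (S::nat) (B::real) (\<delta>::real).
     1 \<le> L \<and> real L \<le> c1 \<and> 2 \<le> W \<and> real W \<le> c2 * N \<and> 1 \<le> S \<and> real S \<le> c2 * N
     \<and> 1 \<le> B \<and> B \<le> c2 * N \<and> 0 < \<delta> \<and> \<delta> < 1 \<longrightarrow>
       covering_number d \<delta> (laplacian d ` Phi d L W S B) \<noteq> \<infinity> \<and>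
       ln (real (the_enat (covering_number d \<delta> (laplacian d ` Phi d L W S B))))
         \<le> C * real S * (ln (1 / \<delta>) + 3 ^ L * ln (real W * B))"
proof -
  \<comment> \<open>The bound holds for all \<open>W\<close>, \<open>S\<close>, \<open>B\<close>.\<close>
  define C where "C = 3 * (1 + ln (6 * (c1 + 1) * (real d + 1)) / ln 2)"
  have "1 \<le> 6 * (c1 + 1) * (real d + 1)"
    using assms mult_mono[of 1 "6 * (c1 + 1)" 1 "real d + 1"] by simp
  then have "0 \<le> ln (6 * (c1 + 1) * (real d + 1)) / ln 2"
    by simp
  then have "0 < C"
    unfolding C_def by (intro mult_pos_pos) auto
  moreover have "covering_number d \<delta> (laplacian d ` Phi d L W S B) \<noteq> \<infinity> \<and>
       ln (real (the_enat (covering_number d \<delta> (laplacian d ` Phi d L W S B))))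
         \<le> C * real S * (ln (1 / \<delta>) + 3 ^ L * ln (real W * B))"
    if "1 \<le> L" "real L \<le> c1" "2 \<le> W" "1 \<le> B" "0 < \<delta>" "\<delta> < 1" for L W S B \<delta>
    using ln_covering_number_laplacian_Phi_le[OF assms(1) that] unfolding C_def by (simp add: mult.assoc)
  ultimately show ?thesis
    by blast
qed

end
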